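(* Let $n,k\ge 1$ be integers, let $z_1,\dots,z_n$ be indeterminates, and let $\lambda=(\lambda_1,\dots,\lambda_k)$ be integers with $0\le\lambda_1\le\lambda_2\le\dots\le\lambda_k$. Then \[ \det(H(\lambda;n))=\sum_{b\in C(k,n)} S(z(b);\lambda)\,D(z(b))^2 . \]
   Context: $p_m=\sum_{i=1}^n z_i^m$ for $m\ge0$. $H(\lambda;n)$ is the $k\times k$ matrix with entries $H(\lambda;n)_{i,j}=p_{\lambda_i+j-1}$. For indeterminates $x_1,\dots,x_k$, $V(x_1,\dots,x_k;\lambda)$ is the $k\times k$ matrix with entries $x_j^{\lambda_i}$ (row $i$, column $j$), $D(x_1,\dots,x_k)=\prod_{1\le i<j\le k}(x_j-x_i)$ (with $D(x_1)=1$), and $S(x_1,\dots,x_k;\lambda)=\det V(x_1,\dots,x_k;\lambda)/D(x_1,\dots,x_k)$ (a polynomial). $C(k,n)$ is the set of $k$-element subsets $b=\{b_1<\dots<b_k\}$ of $\{1,\dots,n\}$, and $z(b)=(z_{b_1},\dots,z_{b_k})$. *)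

theory Defs
  imports "Jordan_Normal_Form.Determinant"
begin

definition psum :: "nat \<Rightarrow> (nat \<Rightarrow> 'a::comm_ring_1) \<Rightarrow> nat \<Rightarrow> 'a" where
  "psum n z m = (\<Sum>i=1..n. z i ^ m)"

(* H(lambda;n): k x k matrix, entry (i,j) (1-based) = p_{lambda_i + j - 1};
   here 0-based indices i,j < k, lambda is 1-based *)
definition Hmat :: "nat \<Rightarrow> (nat \<Rightarrow> nat) \<Rightarrow> nat \<Rightarrow> (nat \<Rightarrow> 'a::comm_ring_1) \<Rightarrow> 'a mat" where
  "Hmat k lam n z = mat k k (\<lambda>(i,j). psum n z (lam (i+1) + j))"

definition Vmat :: "'a::comm_ring_1 list \<Rightarrow> (nat \<Rightarrow> nat) \<Rightarrow> 'a mat" where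
  "Vmat xs lam = mat (length xs) (length xs) (\<lambda>(i,j). (xs ! j) ^ lam (i+1))"

definition Dprod :: "'a::comm_ring_1 list \<Rightarrow> 'a" where
  "Dprod xs = (\<Prod>(i,j)\<in>{(i,j). i < j \<and> j < length xs}. xs ! j - xs ! i)"

definition Sfun :: "'a::field list \<Rightarrow> (nat \<Rightarrow> nat) \<Rightarrow> 'a" where
  "Sfun xs lam = det (Vmat xs lam) / Dprod xs"

definition Csets :: "nat \<Rightarrow> nat \<Rightarrow> nat set set" where
  "Csets k n = {b. b \<subseteq> {1..n} \<and> card b = k}"

definition zsub :: "(nat \<Rightarrow> 'a) \<Rightarrow> nat set \<Rightarrow> 'a list" where
  "zsub z b = map z (sorted_list_of_set b)"

end

theory Submission
  imports Defs
begin

text \<open>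
  Since p(m) = \<Sum>l z(l)^m, the matrix H(\<lambda>;n) is the product of the k \<times> n matrix with entries
  z(l)^\<lambda>(i) and the n \<times> k matrix with entries z(l)^(j-1).  By the Cauchy--Binet formula its
  determinant is the sum, over the k-subsets b of {1..n}, of the products of the corresponding
  maximal minors.  The first minor is det V(z(b);\<lambda>), the second is a Vandermonde determinant,
  equal to D(z(b)); and det V(z(b);\<lambda>) \<cdot> D(z(b)) = S(z(b);\<lambda>) \<cdot> D(z(b))^2.
\<close>

lemma det_mat_scale_rows:
  fixes a :: "nat \<Rightarrow> nat \<Rightarrow> 'a::comm_ring_1"
  shows "det (mat k k (\<lambda>(i,j). c i * a i j)) = (\<Prod>i<k. c i) * det (mat k k (\<lambda>(i,j). a i j))"
proof -
  have "det (mat k k (\<lambda>(i,j). c i * a i j)) =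
      (\<Sum>p | p permutes {0..<k}. signof p * (\<Prod>i\<in>{0..<k}. c i * a i (p i)))"
    by (subst det_def'[of _ k]) (auto simp: permutes_in_image intro!: sum.cong prod.cong)
  also have "\<dots> = (\<Prod>i<k. c i) * (\<Sum>p | p permutes {0..<k}. signof p * (\<Prod>i\<in>{0..<k}. a i (p i)))"
    by (simp add: prod.distrib sum_distrib_left atLeast0LessThan ac_simps)
  also have "\<dots> = (\<Prod>i<k. c i) * det (mat k k (\<lambda>(i,j). a i j))"
    by (subst det_def'[of _ k]) (auto simp: permutes_in_image intro!: sum.cong prod.cong)
  finally show ?thesis .
qed

lemma det_vandermonde:
  fixes x :: "nat \<Rightarrow> 'a::comm_ring_1"
  shows "det (mat k k (\<lambda>(i,j). x i ^ j)) = (\<Prod>j<k. \<Prod>i<j. x j - x i)"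
proof (induction k arbitrary: x)
  case 0
  show ?case by simp
next
  case (Suc k)
  define M where "M = mat (Suc k) (Suc k) (\<lambda>(i,j). x i ^ j)"
  define U where "U = mat (Suc k) (Suc k)
    (\<lambda>(i,j). if i = j then 1 else if j = Suc i then - x 0 else (0::'a))"
  have M: "M \<in> carrier_mat (Suc k) (Suc k)" and U: "U \<in> carrier_mat (Suc k) (Suc k)"
    by (auto simp: M_def U_def)
  have "det U = 1"
  proof -
    have "upper_triangular U" "diag_mat U = map (\<lambda>_. 1) [0..<Suc k]"
      by (auto simp: U_def diag_mat_def)
    then show ?thesis
      by (simp add: det_upper_triangular[OF _ U] map_replicate_const)
  qed
  then have "det M = det (M * U)"
    by (simp add: det_mult[OF M U])
  \<comment> \<open>right multiplication by U subtracts x 0 times column j - 1 from column j\<close>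
  have MU: "(M * U) $$ (i,j) = (if j = 0 then 1 else x i ^ j - x 0 * x i ^ (j - 1))"
    if "i < Suc k" "j < Suc k" for i j
  proof -
    have "(M * U) $$ (i,j) = (\<Sum>l<Suc k. x i ^ l * U $$ (l, j))"
      using that M U by (simp add: M_def scalar_prod_def atLeast0LessThan row_def col_def)
    also have "\<dots> = (\<Sum>l<Suc k. (if l = j then x i ^ l else 0) + (if Suc l = j then - x 0 * x i ^ l else 0))"
      using that by (intro sum.cong) (auto simp: U_def)
    also have "\<dots> = (if j = 0 then 1 else x i ^ j - x 0 * x i ^ (j - 1))"
      using that by (cases j) (auto simp: sum.distrib sum.delta')
    finally show ?thesis .
  qed
  have "det (M * U) = (\<Sum>j<Suc k. (M * U) $$ (0, j) * cofactor (M * U) 0 j)"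
    using M U by (intro laplace_expansion_row) auto
  also have "\<dots> = cofactor (M * U) 0 0"
    by (subst sum.lessThan_Suc_shift) (auto simp: MU intro!: sum.neutral)
  also have "\<dots> = det (mat k k (\<lambda>(i,j). (x (Suc i) - x 0) * x (Suc i) ^ j))"
    unfolding cofactor_def mat_delete_def using M U
    by (auto intro!: arg_cong[where f = det] eq_matI simp: MU algebra_simps)
  also have "\<dots> = (\<Prod>j<k. x (Suc j) - x 0) * (\<Prod>j<k. \<Prod>i<j. x (Suc j) - x (Suc i))"
    by (simp add: det_mat_scale_rows Suc.IH)
  also have "\<dots> = (\<Prod>j<Suc k. \<Prod>i<j. x j - x i)"
    by (simp add: prod.lessThan_Suc_shift prod.distrib del: prod.lessThan_Suc)
  finally show ?case
    using \<open>det M = det (M * U)\<close> by (simp add: M_def)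
qed

lemma prod_pairs_less_eq_nested:
  fixes k :: nat
  shows "(\<Prod>(i,j)\<in>{(i,j). i < j \<and> j < k}. f i j) = (\<Prod>j<k. \<Prod>i<j. f i j)"
proof -
  have "{(i,j). i < j \<and> j < k} = prod.swap ` (SIGMA j:{..<k}. {..<j})"
    by auto
  then have "(\<Prod>(i,j)\<in>{(i,j). i < j \<and> j < k}. f i j) = (\<Prod>(j,i)\<in>(SIGMA j:{..<k}. {..<j}). f i j)"
    by (simp add: prod.reindex case_prod_beta)
  also have "\<dots> = (\<Prod>j<k. \<Prod>i<j. f i j)"
    by (rule prod.Sigma[symmetric]) auto
  finally show ?thesis .
qed

lemma Dprod_eq_det_vandermonde:
  "Dprod xs = det (mat (length xs) (length xs) (\<lambda>(i,j). xs ! i ^ j))"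
  by (simp add: Dprod_def det_vandermonde prod_pairs_less_eq_nested)

lemma det_mat_sum_rows:
  fixes a :: "nat \<Rightarrow> 'b \<Rightarrow> 'a::comm_ring_1" and c :: "'b \<Rightarrow> nat \<Rightarrow> 'a"
  assumes "finite L"
  shows "det (mat k k (\<lambda>(i,j). \<Sum>l\<in>L. a i l * c l j)) =
    (\<Sum>f\<in>{0..<k} \<rightarrow>\<^sub>E L. (\<Prod>i<k. a i (f i)) * det (mat k k (\<lambda>(i,j). c (f i) j)))"
proof -
  let ?P = "{p. p permutes {0..<k}}"
  have "det (mat k k (\<lambda>(i,j). \<Sum>l\<in>L. a i l * c l j)) =
      (\<Sum>p\<in>?P. signof p * (\<Prod>i\<in>{0..<k}. \<Sum>l\<in>L. a i l * c l (p i)))"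
    by (subst det_def'[of _ k]) (auto simp: permutes_in_image intro!: sum.cong prod.cong)
  also have "\<dots> = (\<Sum>p\<in>?P. signof p * (\<Sum>f\<in>{0..<k} \<rightarrow>\<^sub>E L. \<Prod>i\<in>{0..<k}. a i (f i) * c (f i) (p i)))"
    using assms by (simp add: prod_sum_PiE)
  also have "\<dots> = (\<Sum>f\<in>{0..<k} \<rightarrow>\<^sub>E L. (\<Prod>i\<in>{0..<k}. a i (f i)) *
      (\<Sum>p\<in>?P. signof p * (\<Prod>i\<in>{0..<k}. c (f i) (p i))))"
    by (simp add: sum_distrib_left prod.distrib sum.swap[of _ ?P] ac_simps)
  also have "\<dots> = (\<Sum>f\<in>{0..<k} \<rightarrow>\<^sub>E L. (\<Prod>i<k. a i (f i)) * det (mat k k (\<lambda>(i,j). c (f i) j)))"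
    by (subst det_def'[of _ k]) (auto simp: atLeast0LessThan permutes_in_image intro!: sum.cong prod.cong)
  finally show ?thesis .
qed

lemma det_mat_rows_eq_0_if_not_inj:
  assumes "\<not> inj_on f {0..<k}"
  shows "det (mat k k (\<lambda>(i,j). c (f i) j)) = 0"
proof -
  obtain i j where "i < k" "j < k" "i \<noteq> j" "f i = f j"
    using assms by (auto simp: inj_on_def)
  then show ?thesis
    by (intro det_identical_rows[where n = k and i = i and j = j]) (auto simp: row_def)
qed

lemma sum_permutes_prod_times_det:
  fixes a :: "nat \<Rightarrow> 'b \<Rightarrow> 'a::comm_ring_1" and c :: "'b \<Rightarrow> nat \<Rightarrow> 'a"
  shows "(\<Sum>p | p permutes {0..<k}. (\<Prod>i<k. a i (x (p i))) * det (mat k k (\<lambda>(i,j). c (x (p i)) j))) =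
    det (mat k k (\<lambda>(i,j). a i (x j))) * det (mat k k (\<lambda>(i,j). c (x i) j))"
proof -
  let ?C = "mat k k (\<lambda>(i,j). c (x i) j)"
  have "det (mat k k (\<lambda>(i,j). c (x (p i)) j)) = signof p * det ?C" if "p permutes {0..<k}" for p
  proof -
    have "mat k k (\<lambda>(i,j). c (x (p i)) j) = mat k k (\<lambda>(i,j). ?C $$ (p i, j))"
      using that by (auto intro!: eq_matI simp: permutes_in_image)
    then show ?thesis
      using det_permute_rows[OF _ that, of ?C] by simp
  qed
  then have "(\<Sum>p | p permutes {0..<k}. (\<Prod>i<k. a i (x (p i))) * det (mat k k (\<lambda>(i,j). c (x (p i)) j))) =
      (\<Sum>p | p permutes {0..<k}. signof p * (\<Prod>i\<in>{0..<k}. a i (x (p i))) * det ?C)"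
    by (intro sum.cong) (auto simp: atLeast0LessThan)
  also have "\<dots> = (\<Sum>p | p permutes {0..<k}. signof p * (\<Prod>i\<in>{0..<k}. a i (x (p i)))) * det ?C"
    by (simp add: sum_distrib_right)
  also have "(\<Sum>p | p permutes {0..<k}. signof p * (\<Prod>i\<in>{0..<k}. a i (x (p i)))) =
      det (mat k k (\<lambda>(i,j). a i (x j)))"
    by (subst det_def'[of _ k]) (auto simp: permutes_in_image intro!: sum.cong prod.cong)
  finally show ?thesis .
qed

lemma bij_betw_permutes_inj_PiE:
  assumes "distinct xs"
  defines "K \<equiv> {0..<length xs}"
  shows "bij_betw (\<lambda>p. restrict (\<lambda>i. xs ! p i) K)
    {p. p permutes K} {f \<in> K \<rightarrow>\<^sub>E set xs. inj_on f K}"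
proof (rule bij_betw_byWitness)
  have nth: "bij_betw (nth xs) K (set xs)"
    using assms by (simp add: K_def bij_betw_nth atLeast0LessThan)
  define idx where "idx f i = (if i \<in> K then inv_into K (nth xs) (f i) else i)" for f :: "nat \<Rightarrow> 'a" and i
  show "\<forall>p\<in>{p. p permutes K}. idx (restrict (\<lambda>i. xs ! p i) K) = p"
    using nth by (auto simp: idx_def fun_eq_iff permutes_in_image permutes_not_in bij_betw_inv_into_left)
  show "\<forall>f\<in>{f \<in> K \<rightarrow>\<^sub>E set xs. inj_on f K}. restrict (\<lambda>i. xs ! idx f i) K = f"
    using nth by (auto simp: idx_def fun_eq_iff bij_betw_inv_into_right PiE_def extensional_def Pi_iff)
  have "restrict (\<lambda>i. xs ! p i) K \<in> K \<rightarrow>\<^sub>E set xs \<and> inj_on (restrict (\<lambda>i. xs ! p i) K) K"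
    if p: "p permutes K" for p
  proof
    show "restrict (\<lambda>i. xs ! p i) K \<in> K \<rightarrow>\<^sub>E set xs"
      using p by (auto simp: K_def permutes_in_image)
    have "inj_on (nth xs \<circ> p) K"
      using p nth by (metis bij_betw_def comp_inj_on permutes_image permutes_inj_on)
    then show "inj_on (restrict (\<lambda>i. xs ! p i) K) K"
      by (simp add: inj_on_def)
  qed
  then show "(\<lambda>p. restrict (\<lambda>i. xs ! p i) K) ` {p. p permutes K} \<subseteq> {f \<in> K \<rightarrow>\<^sub>E set xs. inj_on f K}"
    by blast
  have "idx f permutes K" if f: "f \<in> K \<rightarrow>\<^sub>E set xs" "inj_on f K" for f
  proof (rule inj_on_nat_permutes)
    have fK: "f ` K \<subseteq> set xs"
      using f(1) by auto
    have "inj_on (inv_into K (nth xs) \<circ> f) K"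
      using f(2) fK nth by (intro comp_inj_on inj_on_inv_into) (auto simp: bij_betw_def)
    then show "inj_on (idx f) K"
      by (simp add: inj_on_def idx_def)
    show "idx f \<in> K \<rightarrow> K"
      using fK nth by (auto simp: idx_def bij_betw_def image_subset_iff intro!: inv_into_into)
  qed (auto simp: K_def idx_def)
  then show "idx ` {f \<in> K \<rightarrow>\<^sub>E set xs. inj_on f K} \<subseteq> {p. p permutes K}"
    by blast
qed

lemma sum_inj_PiE_by_image:
  assumes "finite L"
  shows "(\<Sum>f\<in>{f \<in> {0..<k} \<rightarrow>\<^sub>E L. inj_on f {0..<k}}. g f) =
    (\<Sum>b | b \<subseteq> L \<and> card b = k. \<Sum>f\<in>{f \<in> {0..<k} \<rightarrow>\<^sub>E b. inj_on f {0..<k}}. g f)"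
proof -
  let ?K = "{0..<k}"
  let ?Fi = "{f \<in> ?K \<rightarrow>\<^sub>E L. inj_on f ?K}"
  have fibre: "{f \<in> ?Fi. f ` ?K = b} = {f \<in> ?K \<rightarrow>\<^sub>E b. inj_on f ?K}"
    if b: "b \<subseteq> L" "card b = k" for b
  proof
    show "{f \<in> ?Fi. f ` ?K = b} \<subseteq> {f \<in> ?K \<rightarrow>\<^sub>E b. inj_on f ?K}"
      by auto
    show "{f \<in> ?K \<rightarrow>\<^sub>E b. inj_on f ?K} \<subseteq> {f \<in> ?Fi. f ` ?K = b}"
    proof
      fix f assume "f \<in> {f \<in> ?K \<rightarrow>\<^sub>E b. inj_on f ?K}"
      then have f: "f \<in> ?K \<rightarrow>\<^sub>E b" "inj_on f ?K"
        by simp_all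
      have "f ` ?K \<subseteq> b" "card (f ` ?K) = card b"
        using f b by (auto simp: card_image)
      then have "f ` ?K = b"
        using b assms by (intro card_subset_eq) (auto intro: finite_subset)
      moreover have "f \<in> ?K \<rightarrow>\<^sub>E L"
        using f b by (auto simp: PiE_iff)
      ultimately show "f \<in> {f \<in> ?Fi. f ` ?K = b}"
        using f by simp
    qed
  qed
  have "(\<Sum>b | b \<subseteq> L \<and> card b = k. \<Sum>f\<in>{f \<in> ?K \<rightarrow>\<^sub>E b. inj_on f ?K}. g f) =
      (\<Sum>b | b \<subseteq> L \<and> card b = k. \<Sum>f\<in>{f \<in> ?Fi. f ` ?K = b}. g f)"
    by (rule sum.cong[OF refl], rule arg_cong[where f = "sum g"], rule fibre[symmetric]) auto
  also have "\<dots> = (\<Sum>f\<in>?Fi. g f)"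
    using assms by (intro sum.group) (auto simp: finite_PiE card_image)
  finally show ?thesis
    by (rule sym)
qed

theorem cauchy_binet:
  fixes a :: "nat \<Rightarrow> 'b::linorder \<Rightarrow> 'a::comm_ring_1" and c :: "'b \<Rightarrow> nat \<Rightarrow> 'a"
  assumes "finite L"
  shows "det (mat k k (\<lambda>(i,j). \<Sum>l\<in>L. a i l * c l j)) =
    (\<Sum>b | b \<subseteq> L \<and> card b = k.
       det (mat k k (\<lambda>(i,j). a i (sorted_list_of_set b ! j))) *
       det (mat k k (\<lambda>(i,j). c (sorted_list_of_set b ! i) j)))"
proof -
  let ?K = "{0..<k}"
  define g where "g f = (\<Prod>i<k. a i (f i)) * det (mat k k (\<lambda>(i,j). c (f i) j))"
    for f :: "nat \<Rightarrow> 'b"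
  have "det (mat k k (\<lambda>(i,j). \<Sum>l\<in>L. a i l * c l j)) = (\<Sum>f\<in>?K \<rightarrow>\<^sub>E L. g f)"
    unfolding g_def by (rule det_mat_sum_rows[OF assms])
  also have "\<dots> = (\<Sum>f\<in>{f \<in> ?K \<rightarrow>\<^sub>E L. inj_on f ?K}. g f)"
    using assms
    by (intro sum.mono_neutral_right) (auto simp: g_def finite_PiE det_mat_rows_eq_0_if_not_inj)
  also have "\<dots> = (\<Sum>b | b \<subseteq> L \<and> card b = k. \<Sum>f\<in>{f \<in> ?K \<rightarrow>\<^sub>E b. inj_on f ?K}. g f)"
    by (rule sum_inj_PiE_by_image[OF assms])
  also have "\<dots> = (\<Sum>b | b \<subseteq> L \<and> card b = k.
      \<Sum>p | p permutes ?K. g (\<lambda>i. sorted_list_of_set b ! p i))"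
  proof (rule sum.cong[OF refl])
    fix b assume "b \<in> {b. b \<subseteq> L \<and> card b = k}"
    then have "finite b" "card b = k"
      using assms by (auto intro: finite_subset)
    then have xs: "distinct (sorted_list_of_set b)" "set (sorted_list_of_set b) = b"
      "length (sorted_list_of_set b) = k"
      by simp_all
    have "mat k k (\<lambda>(i,j). c (restrict f ?K i) j) = mat k k (\<lambda>(i,j). c (f i) j)" for f
      by (rule eq_matI) auto
    then have "g (restrict f ?K) = g f" for f
      by (simp add: g_def)
    then show "(\<Sum>f\<in>{f \<in> ?K \<rightarrow>\<^sub>E b. inj_on f ?K}. g f) =
        (\<Sum>p | p permutes ?K. g (\<lambda>i. sorted_list_of_set b ! p i))"
      using sum.reindex_bij_betw[OF bij_betw_permutes_inj_PiE[OF xs(1)], of g] xs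
      by simp
  qed
  also have "\<dots> = (\<Sum>b | b \<subseteq> L \<and> card b = k.
       det (mat k k (\<lambda>(i,j). a i (sorted_list_of_set b ! j))) *
       det (mat k k (\<lambda>(i,j). c (sorted_list_of_set b ! i) j)))"
    unfolding g_def by (rule sum.cong[OF refl], rule sum_permutes_prod_times_det)
  finally show ?thesis .
qed

lemma Hmat_eq_mat_sum:
  "Hmat k lam n z = mat k k (\<lambda>(i,j). \<Sum>l\<in>{1..n}. z l ^ lam (Suc i) * z l ^ j)"
  by (simp add: Hmat_def psum_def power_add)

theorem theorem2p6:
  fixes n k :: nat and z :: "nat \<Rightarrow> 'a::field_char_0" and lam :: "nat \<Rightarrow> nat"
  assumes "n \<ge> 1" and "k \<ge> 1"
    and "\<And>i j. 1 \<le> i \<Longrightarrow> i \<le> j \<Longrightarrow> j \<le> k \<Longrightarrow> lam i \<le> lam j"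
    and "inj_on z {1..n}"
  shows "det (Hmat k lam n z) = (\<Sum>b\<in>Csets k n. Sfun (zsub z b) lam * (Dprod (zsub z b))^2)"
proof -
  let ?s = sorted_list_of_set
  have "det (Hmat k lam n z) = (\<Sum>b | b \<subseteq> {1..n} \<and> card b = k.
      det (mat k k (\<lambda>(i,j). z (?s b ! j) ^ lam (Suc i))) * det (mat k k (\<lambda>(i,j). z (?s b ! i) ^ j)))"
    unfolding Hmat_eq_mat_sum by (rule cauchy_binet) simp
  also have "\<dots> = (\<Sum>b\<in>Csets k n. det (Vmat (zsub z b) lam) * Dprod (zsub z b))"
  proof (rule sum.cong)
    show "{b. b \<subseteq> {1..n} \<and> card b = k} = Csets k n"
      by (simp add: Csets_def)
    fix b assume "b \<in> Csets k n"
    then have "length (zsub z b) = k"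
      by (auto simp: Csets_def zsub_def intro: finite_subset)
    then show "det (mat k k (\<lambda>(i,j). z (?s b ! j) ^ lam (Suc i))) * det (mat k k (\<lambda>(i,j). z (?s b ! i) ^ j))
        = det (Vmat (zsub z b) lam) * Dprod (zsub z b)"
      by (auto simp: Vmat_def Dprod_eq_det_vandermonde zsub_def
          intro!: arg_cong2[where f = "(*)"] arg_cong[where f = det] eq_matI)
  qed
  \<comment> \<open>When D(z(b)) = 0, Sfun is the junk value det V / 0 = 0,
    but then both sides of this step vanish.\<close>
  also have "\<dots> = (\<Sum>b\<in>Csets k n. Sfun (zsub z b) lam * (Dprod (zsub z b))^2)"
    by (intro sum.cong refl) (auto simp: Sfun_def power2_eq_square)
  finally show ?thesis .
qed

end
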